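(* $\mathcal{L}_{\mathsf{SAFA}}\subsetneq\mathcal{L}_{\mathsf{CCA}}$: every data language accepted by a SAFA is accepted by some class counting automaton, and some data language accepted by a class counting automaton is accepted by no SAFA.
   Context: $D$ is a fixed countably infinite set of data values; for a finite alphabet $\Sigma$, data languages are subsets of $(\Sigma\times D)^*$. A set augmented finite automaton (SAFA) is a tuple $M=(Q,\Sigma\times D,q_0,F,H,\delta)$: $Q$ finite set of states, $q_0\in Q$ initial, $F\subseteq Q$ final, $H=\{h_1,\dots,h_m\}$ a finite collection of (names of) sets of data values, $\delta\subseteq Q\times\Sigma\times C\times OP\times Q$ with $C=\{p(h_i),\,!p(h_i)\}$, $OP=\{-\}\cup\{\mathsf{ins}(h_i)\}$. Configurations are $(q,\langle S_1,\dots,S_m\rangle)$, $S_i\subseteq D$ finite; initially state $q_0$ and all sets empty. On reading $(a,d)$, a transition $(q,a,\alpha,op,q')$ from the current state may be taken if $\alpha=p(h_i)$ and $d\in S_i$, or $\alpha=\,!p(h_i)$ and $d\notin S_i$; then the state becomes $q'$ and if $op=\mathsf{ins}(h_j)$, $d$ is added to $S_j$. A word is accepted if some run reads it entirely and ends in $F$; $\mathcal{L}_{\mathsf{SAFA}}$ is the class of languages accepted by SAFA. A class counting automaton (CCA) is a tuple $(Q,\Sigma,\delta,q_0,F)$ with finite state set $Q$, initial state $q_0$, final states $F$, and $\delta\subseteq Q\times\Sigma\times C\times\mathit{Inst}\times\mathbb{N}\times Q$, where a constraint in $C$ is a pair $(\mathsf{op},e)$ with $\mathsf{op}\in\{<,>,=,\leq,\geq,\neq\}$,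 $e\in\mathbb{N}$, and $\mathit{Inst}=\{\uparrow^+,\downarrow\}$. The automaton maintains a bag $\beta:D\to\mathbb{N}$, initially $\beta(d)=0$ for all $d$. On reading $(a,d)$ in state $q$ it may take a transition $(q,a,(\mathsf{op},e),\mathit{ins},m,q')$ provided $\beta(d)\ \mathsf{op}\ e$ holds; then $\beta(d)$ is increased by $m$ if $\mathit{ins}=\uparrow^+$, or reset to $m$ if $\mathit{ins}=\downarrow$, and the state becomes $q'$. A word is accepted if some run reads it entirely and ends in $F$. $\mathcal{L}_{\mathsf{CCA}}$ is the class of languages accepted by CCA. *)

theory Defs
  imports Main
begin

text \<open>Data values: the fixed countably infinite set D is represented by the type nat.\<close>
type_synonym data = nat

text \<open>Sets h_1..h_m are indexed by 0..m-1.\<close>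
datatype safa_cond = Pin nat | NotPin nat
datatype safa_op = NoOp | Ins nat

record ('q, 'a) safa =
  sQ :: "'q set"
  sSigma :: "'a set"
  sq0 :: 'q
  sF :: "'q set"
  sm :: nat
  sdelta :: "('q \<times> 'a \<times> safa_cond \<times> safa_op \<times> 'q) set"

definition cond_ok :: "nat \<Rightarrow> safa_cond \<Rightarrow> bool" where
  "cond_ok m c = (case c of Pin i \<Rightarrow> i < m | NotPin i \<Rightarrow> i < m)"

definition op_ok :: "nat \<Rightarrow> safa_op \<Rightarrow> bool" where
  "op_ok m o' = (case o' of NoOp \<Rightarrow> True | Ins j \<Rightarrow> j < m)"

definition safa_wf :: "('q, 'a) safa \<Rightarrow> bool" where
  "safa_wf M \<longleftrightarrow> finite (sQ M) \<and> finite (sSigma M) \<and> sq0 M \<in> sQ M \<and> sF M \<subseteq> sQ M \<and>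
     (\<forall>(q, a, c, o', q') \<in> sdelta M. q \<in> sQ M \<and> a \<in> sSigma M \<and> cond_ok (sm M) c
        \<and> op_ok (sm M) o' \<and> q' \<in> sQ M)"

fun safa_holds :: "safa_cond \<Rightarrow> (nat \<Rightarrow> data set) \<Rightarrow> data \<Rightarrow> bool" where
  "safa_holds (Pin i) S d = (d \<in> S i)"
| "safa_holds (NotPin i) S d = (d \<notin> S i)"

fun safa_apply :: "safa_op \<Rightarrow> data \<Rightarrow> (nat \<Rightarrow> data set) \<Rightarrow> (nat \<Rightarrow> data set)" where
  "safa_apply NoOp d S = S"
| "safa_apply (Ins j) d S = S(j := insert d (S j))"

inductive safa_run :: "('q, 'a) safa \<Rightarrow> 'q \<times> (nat \<Rightarrow> data set) \<Rightarrow> ('a \<times> data) list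
    \<Rightarrow> 'q \<times> (nat \<Rightarrow> data set) \<Rightarrow> bool" for M where
  safa_nil: "safa_run M c [] c"
| safa_step: "(q, a, c, o', q') \<in> sdelta M \<Longrightarrow> safa_holds c S d \<Longrightarrow>
     safa_run M (q', safa_apply o' d S) w cf \<Longrightarrow> safa_run M (q, S) ((a, d) # w) cf"

definition safa_lang :: "('q, 'a) safa \<Rightarrow> ('a \<times> data) list set" where
  "safa_lang M = {w. \<exists>q S. safa_run M (sq0 M, \<lambda>_. {}) w (q, S) \<and> q \<in> sF M}"

datatype cca_rel = RLt | RGt | REq | RLe | RGe | RNe
datatype cca_inst = IncBy | ResetTo

fun cca_holds :: "cca_rel \<Rightarrow> nat \<Rightarrow> nat \<Rightarrow> bool" where
  "cca_holds RLt x e = (x < e)"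
| "cca_holds RGt x e = (x > e)"
| "cca_holds REq x e = (x = e)"
| "cca_holds RLe x e = (x \<le> e)"
| "cca_holds RGe x e = (x \<ge> e)"
| "cca_holds RNe x e = (x \<noteq> e)"

fun cca_apply :: "cca_inst \<Rightarrow> nat \<Rightarrow> nat \<Rightarrow> nat" where
  "cca_apply IncBy m x = x + m"
| "cca_apply ResetTo m x = m"

record ('q, 'a) cca =
  cQ :: "'q set"
  cSigma :: "'a set"
  cdelta :: "('q \<times> 'a \<times> (cca_rel \<times> nat) \<times> cca_inst \<times> nat \<times> 'q) set"
  cq0 :: 'q
  cF :: "'q set"

definition cca_wf :: "('q, 'a) cca \<Rightarrow> bool" where
  "cca_wf C \<longleftrightarrow> finite (cQ C) \<and> finite (cSigma C) \<and> finite (cdelta C) \<and> cq0 C \<in> cQ C \<and>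
     cF C \<subseteq> cQ C \<and>
     (\<forall>(q, a, ce, ins, m, q') \<in> cdelta C. q \<in> cQ C \<and> a \<in> cSigma C \<and> q' \<in> cQ C)"

inductive cca_run :: "('q, 'a) cca \<Rightarrow> 'q \<times> (data \<Rightarrow> nat) \<Rightarrow> ('a \<times> data) list
    \<Rightarrow> 'q \<times> (data \<Rightarrow> nat) \<Rightarrow> bool" for C where
  cca_nil: "cca_run C c [] c"
| cca_step: "(q, a, (r, e), ins, m, q') \<in> cdelta C \<Longrightarrow> cca_holds r (\<beta> d) e \<Longrightarrow>
     cca_run C (q', \<beta>(d := cca_apply ins m (\<beta> d))) w cf \<Longrightarrow> cca_run C (q, \<beta>) ((a, d) # w) cf"

definition cca_lang :: "('q, 'a) cca \<Rightarrow> ('a \<times> data) list set" where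
  "cca_lang C = {w. \<exists>q \<beta>. cca_run C (cq0 C, \<lambda>_. 0) w (q, \<beta>) \<and> q \<in> cF C}"

end

theory Submission
  imports Defs "HOL-Library.Nat_Bijection"
begin

text \<open>A CCA simulates a SAFA by keeping in the bag value of each datum d the binary code
(\<open>set_encode\<close>) of its profile, the set of indices i < m with d \<in> S_i: a SAFA transition
becomes one CCA transition per profile satisfying its condition, which tests the code for
equality and resets it to the code of the updated profile.

For strictness, \<open>alt_cca\<close> accepts the words in which the letters carried by each datum
alternate 0, 1, 0, 1, \<dots> Let A = (0,0)\<dots>(0,n-1) and B = (1,0)\<dots>(1,n-1) with n = |Q|.
Along an accepting SAFA run on (A B)^r the stores only grow, and they stay inside
{..<m} \<times> {..<n}; so for r > m n some A-block leaves the store unchanged. Inside that block the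
run behaves like a finite automaton, a state repeats, and cutting out the loop yields an
accepted word in which some datum receives a 1 without a preceding 0.\<close>

lemma safa_run_Nil_iff: "safa_run M c [] c' \<longleftrightarrow> c' = c"
  by (auto elim: safa_run.cases intro: safa_nil)

lemma safa_run_Cons_iff:
  "safa_run M (q, S) ((a, d) # w) c' \<longleftrightarrow>
   (\<exists>c oo p. (q, a, c, oo, p) \<in> sdelta M \<and> safa_holds c S d \<and> safa_run M (p, safa_apply oo d S) w c')"
  by (subst safa_run.simps) auto

lemma safa_run_append_iff:
  "safa_run M c (u @ v) c' \<longleftrightarrow> (\<exists>c''. safa_run M c u c'' \<and> safa_run M c'' v c')"
proof (induction u arbitrary: c)
  case Nil
  then show ?case by (simp add: safa_run_Nil_iff)
next
  case (Cons x u)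
  obtain q S a d where "c = (q, S)" "x = (a, d)" by fastforce
  then show ?case using Cons.IH by (simp add: safa_run_Cons_iff) blast
qed

lemma safa_wf_transD:
  assumes "safa_wf M" "(q, a, c, oo, q') \<in> sdelta M"
  shows "q \<in> sQ M" "a \<in> sSigma M" "cond_ok (sm M) c" "op_ok (sm M) oo" "q' \<in> sQ M"
  using assms unfolding safa_wf_def by fastforce+

lemma safa_run_state_in_sQ:
  "safa_run M c w c' \<Longrightarrow> safa_wf M \<Longrightarrow> fst c \<in> sQ M \<Longrightarrow> fst c' \<in> sQ M"
  by (induction rule: safa_run.induct) (auto dest: safa_wf_transD)

lemma finite_cond_ok: "finite {c. cond_ok m c}"
proof (rule finite_subset)
  show "{c. cond_ok m c} \<subseteq> Pin ` {..<m} \<union> NotPin ` {..<m}"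
  proof
    fix c assume "c \<in> {c. cond_ok m c}"
    then show "c \<in> Pin ` {..<m} \<union> NotPin ` {..<m}" by (cases c) (auto simp: cond_ok_def)
  qed
qed simp

lemma finite_op_ok: "finite {oo. op_ok m oo}"
proof (rule finite_subset)
  show "{oo. op_ok m oo} \<subseteq> insert NoOp (Ins ` {..<m})"
  proof
    fix oo assume "oo \<in> {oo. op_ok m oo}"
    then show "oo \<in> insert NoOp (Ins ` {..<m})" by (cases oo) (auto simp: op_ok_def)
  qed
qed simp

lemma finite_sdelta:
  assumes wf: "safa_wf M"
  shows "finite (sdelta M)"
proof (rule finite_subset)
  show "sdelta M \<subseteq> sQ M \<times> sSigma M \<times> {c. cond_ok (sm M) c} \<times> {oo. op_ok (sm M) oo} \<times> sQ M"
    using safa_wf_transD[OF wf] by fast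
  show "finite (sQ M \<times> sSigma M \<times> {c. cond_ok (sm M) c} \<times> {oo. op_ok (sm M) oo} \<times> sQ M)"
    using wf finite_cond_ok finite_op_ok by (simp add: safa_wf_def)
qed

section \<open>Simulating a SAFA by a CCA\<close>

definition profile :: "nat \<Rightarrow> (nat \<Rightarrow> data set) \<Rightarrow> data \<Rightarrow> nat set" where
  "profile m S d = {i. i < m \<and> d \<in> S i}"

fun profile_holds :: "safa_cond \<Rightarrow> nat set \<Rightarrow> bool" where
  "profile_holds (Pin i) T = (i \<in> T)"
| "profile_holds (NotPin i) T = (i \<notin> T)"

fun profile_apply :: "safa_op \<Rightarrow> nat set \<Rightarrow> nat set" where
  "profile_apply NoOp T = T"
| "profile_apply (Ins j) T = insert j T"

lemma safa_holds_iff_profile_holds: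
  "cond_ok m c \<Longrightarrow> safa_holds c S d \<longleftrightarrow> profile_holds c (profile m S d)"
  by (cases c) (auto simp: cond_ok_def profile_def)

lemma profile_safa_apply:
  "op_ok m oo \<Longrightarrow> profile m (safa_apply oo d S) = (profile m S)(d := profile_apply oo (profile m S d))"
  by (cases oo) (auto simp: profile_def op_ok_def fun_eq_iff)

lemma finite_profile: "finite (profile m S d)"
  by (simp add: profile_def)

definition store_code :: "nat \<Rightarrow> (nat \<Rightarrow> data set) \<Rightarrow> data \<Rightarrow> nat" where
  "store_code m S d = set_encode (profile m S d)"

lemma store_code_empty: "store_code m (\<lambda>_. {}) = (\<lambda>_. 0)"
  by (simp add: store_code_def profile_def fun_eq_iff)

lemma store_code_safa_apply:
  "op_ok m oo \<Longrightarrow>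
   store_code m (safa_apply oo d S) = (store_code m S)(d := set_encode (profile_apply oo (profile m S d)))"
  by (simp add: store_code_def profile_safa_apply fun_eq_iff)

lemma store_code_eq_set_encode_iff:
  "finite T \<Longrightarrow> store_code m S d = set_encode T \<longleftrightarrow> profile m S d = T"
  by (simp add: store_code_def set_encode_eq finite_profile)

definition cca_of_safa :: "('q, 'a) safa \<Rightarrow> ('q \<Rightarrow> nat) \<Rightarrow> (nat, 'a) cca" where
  "cca_of_safa M f = \<lparr>cQ = f ` sQ M, cSigma = sSigma M,
     cdelta = {(f q, a, (REq, set_encode T), ResetTo, set_encode (profile_apply oo T), f q')
        | q a c oo q' T. (q, a, c, oo, q') \<in> sdelta M \<and> T \<subseteq> {..<sm M} \<and> profile_holds c T},
     cq0 = f (sq0 M), cF = f ` sF M\<rparr>"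

lemma safa_run_imp_cca_run:
  assumes wf: "safa_wf M"
  shows "safa_run M (q, S) w (q', S') \<Longrightarrow>
    cca_run (cca_of_safa M f) (f q, store_code (sm M) S) w (f q', store_code (sm M) S')"
proof (induction "(q, S)" w "(q', S')" arbitrary: q S rule: safa_run.induct)
  case safa_nil
  then show ?case by (simp add: cca_nil)
next
  case (safa_step q a c oo p S d w)
  have ok: "cond_ok (sm M) c" "op_ok (sm M) oo"
    using safa_wf_transD[OF wf safa_step.hyps(1)] by auto
  let ?T = "profile (sm M) S d"
  have "(f q, a, (REq, set_encode ?T), ResetTo, set_encode (profile_apply oo ?T), f p)
      \<in> cdelta (cca_of_safa M f)"
    using safa_step.hyps(1,2) safa_holds_iff_profile_holds[OF ok(1)]
    unfolding cca_of_safa_def by (fastforce simp: profile_def)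
  then show ?case
    using safa_step.hyps(4)
    by (auto intro!: cca_step simp: store_code_def store_code_safa_apply[OF ok(2)])
qed

lemma cca_run_imp_safa_run:
  assumes wf: "safa_wf M" and inj: "inj_on f (sQ M)"
  shows "cca_run (cca_of_safa M f) (f q, store_code (sm M) S) w c' \<Longrightarrow> q \<in> sQ M \<Longrightarrow>
    \<exists>q' S'. safa_run M (q, S) w (q', S') \<and> c' = (f q', store_code (sm M) S')"
proof (induction "(f q, store_code (sm M) S)" w c' arbitrary: q S rule: cca_run.induct)
  case cca_nil
  then show ?case by (auto intro: safa_nil)
next
  case (cca_step a r e ins n p' d w c')
  then obtain q0 c oo q1 T where tr: "f q = f q0" "r = REq" "e = set_encode T" "ins = ResetTo"
      "n = set_encode (profile_apply oo T)" "p' = f q1" "(q0, a, c, oo, q1) \<in> sdelta M"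
      "T \<subseteq> {..<sm M}" "profile_holds c T"
    unfolding cca_of_safa_def by auto
  have ok: "q0 \<in> sQ M" "cond_ok (sm M) c" "op_ok (sm M) oo" "q1 \<in> sQ M"
    using safa_wf_transD[OF wf tr(7)] by auto
  have "q0 = q" using inj tr(1) ok(1) cca_step.prems by (auto dest: inj_onD)
  have T: "T = profile (sm M) S d"
    using cca_step.hyps(2) tr(2,3,8) finite_subset[OF tr(8)]
    by (simp add: store_code_eq_set_encode_iff)
  have "safa_holds c S d"
    using tr(9) T safa_holds_iff_profile_holds[OF ok(2)] by simp
  moreover have "(store_code (sm M) S)(d := cca_apply ins n (store_code (sm M) S d))
      = store_code (sm M) (safa_apply oo d S)"
    using tr(4,5) T store_code_safa_apply[OF ok(3)] by simp
  ultimately show ?case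
    using cca_step.hyps(4)[of q1 "safa_apply oo d S"] tr(6,7) ok(4) \<open>q0 = q\<close>
    by (auto intro: safa_step)
qed

lemma cca_lang_cca_of_safa:
  assumes wf: "safa_wf M" and inj: "inj_on f (sQ M)"
  shows "cca_lang (cca_of_safa M f) = safa_lang M"
proof
  have q0: "sq0 M \<in> sQ M" and final: "sF M \<subseteq> sQ M"
    using wf by (auto simp: safa_wf_def)
  show "cca_lang (cca_of_safa M f) \<subseteq> safa_lang M"
  proof
    fix w assume "w \<in> cca_lang (cca_of_safa M f)"
    then obtain c' where run: "cca_run (cca_of_safa M f) (f (sq0 M), store_code (sm M) (\<lambda>_. {})) w c'"
        and acc: "fst c' \<in> f ` sF M"
      by (auto simp: cca_lang_def cca_of_safa_def store_code_empty)
    then obtain q' S' where safa: "safa_run M (sq0 M, \<lambda>_. {}) w (q', S')"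
        and "c' = (f q', store_code (sm M) S')"
      using cca_run_imp_safa_run[OF wf inj run q0] by blast
    moreover have "q' \<in> sQ M"
      using safa_run_state_in_sQ[OF safa wf] q0 by simp
    ultimately show "w \<in> safa_lang M"
      using acc final inj by (auto simp: safa_lang_def dest: inj_onD)
  qed
  show "safa_lang M \<subseteq> cca_lang (cca_of_safa M f)"
    using safa_run_imp_cca_run[OF wf]
    by (force simp: safa_lang_def cca_lang_def cca_of_safa_def store_code_empty)
qed

lemma cca_wf_cca_of_safa:
  assumes wf: "safa_wf M"
  shows "cca_wf (cca_of_safa M f)"
proof -
  let ?enc = "\<lambda>((q, a, c, oo, q'), T).
    (f q, a, (REq, set_encode T), ResetTo, set_encode (profile_apply oo T), f q')"
  have "cdelta (cca_of_safa M f) \<subseteq> ?enc ` (sdelta M \<times> Pow {..<sm M})"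
    unfolding cca_of_safa_def by force
  then have "finite (cdelta (cca_of_safa M f))"
    using finite_sdelta[OF wf]
    by (meson finite_Pow_iff finite_SigmaI finite_imageI finite_lessThan finite_subset)
  then show ?thesis
    using wf safa_wf_transD[OF wf] unfolding cca_wf_def safa_wf_def cca_of_safa_def by fastforce
qed

section \<open>A CCA language that no SAFA accepts\<close>

definition stored :: "(nat \<Rightarrow> data set) \<Rightarrow> (nat \<times> data) set" where
  "stored S = {(i, d). d \<in> S i}"

lemma stored_eq_iff: "stored S = stored S' \<longleftrightarrow> S = S'"
  by (auto simp: stored_def fun_eq_iff)

lemma stored_safa_apply_mono: "stored S \<subseteq> stored (safa_apply oo d S)"
  by (cases oo) (auto simp: stored_def)

lemma stored_safa_apply_subset:
  "op_ok m oo \<Longrightarrow> stored (safa_apply oo d S) \<subseteq> stored S \<union> {..<m} \<times> {d}"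
  by (cases oo) (auto simp: stored_def op_ok_def split: if_splits)

lemma safa_run_stored_mono: "safa_run M c w c' \<Longrightarrow> stored (snd c) \<subseteq> stored (snd c')"
  by (induction rule: safa_run.induct) (use stored_safa_apply_mono in fastforce)+

lemma safa_run_stored_subset:
  "safa_run M c w c' \<Longrightarrow> safa_wf M \<Longrightarrow>
   stored (snd c') \<subseteq> stored (snd c) \<union> {..<sm M} \<times> snd ` set w"
proof (induction rule: safa_run.induct)
  case (safa_nil c)
  then show ?case by simp
next
  case (safa_step q a c oo q' S d w cf)
  then have "op_ok (sm M) oo" by (auto dest: safa_wf_transD)
  then show ?case using safa_step stored_safa_apply_subset[of "sm M" oo d S] by auto
qed

lemma safa_run_stationary_round:
  assumes wf: "safa_wf M" and fin: "finite X" and data: "snd ` set (A @ B) \<subseteq> X"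
  shows "safa_run M (q, S) (concat (replicate r (A @ B))) c' \<Longrightarrow>
    stored S \<subseteq> {..<sm M} \<times> X \<Longrightarrow> sm M * card X < card (stored S) + r \<Longrightarrow>
    \<exists>j<r. \<exists>p S' p'. safa_run M (q, S) (concat (replicate j (A @ B))) (p, S') \<and>
      safa_run M (p, S') A (p', S') \<and>
      safa_run M (p', S') (B @ concat (replicate (r - Suc j) (A @ B))) c'"
proof (induction r arbitrary: q S)
  case 0
  have "card (stored S) \<le> card ({..<sm M} \<times> X)"
    using 0 fin by (intro card_mono) auto
  then show ?case
    using 0 by (simp add: card_cartesian_product)
next
  case (Suc r)
  from Suc.prems(1) obtain p S2 p3 S3 where runA: "safa_run M (q, S) A (p, S2)"
    and runB: "safa_run M (p, S2) B (p3, S3)"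
    and rest: "safa_run M (p3, S3) (concat (replicate r (A @ B))) c'"
    by (fastforce simp: safa_run_append_iff)
  show ?case
  proof (cases "S2 = S")
    case True
    then show ?thesis
      using runA runB rest by (intro exI[of _ 0]) (auto simp: safa_run_append_iff safa_run_Nil_iff)
  next
    case False
    have runAB: "safa_run M (q, S) (A @ B) (p3, S3)"
      using runA runB by (auto simp: safa_run_append_iff)
    have "stored S \<subset> stored S2"
      using safa_run_stored_mono[OF runA] False stored_eq_iff by fastforce
    also have "stored S2 \<subseteq> stored S3"
      using safa_run_stored_mono[OF runB] by simp
    finally have grow: "stored S \<subset> stored S3" .
    have bound: "stored S3 \<subseteq> {..<sm M} \<times> X"
      using safa_run_stored_subset[OF runAB wf] Suc.prems(2) data by auto
    have "card (stored S) < card (stored S3)"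
      using grow bound fin by (intro psubset_card_mono) (auto intro: finite_subset)
    with Suc.prems(3) have "sm M * card X < card (stored S3) + r" by simp
    from Suc.IH[OF rest bound this] obtain j p1 S1 p2 where j: "j < r"
      and prefix: "safa_run M (p3, S3) (concat (replicate j (A @ B))) (p1, S1)"
      and "safa_run M (p1, S1) A (p2, S1)"
      and "safa_run M (p2, S1) (B @ concat (replicate (r - Suc j) (A @ B))) c'"
      by blast
    moreover have "safa_run M (q, S) ((A @ B) @ concat (replicate j (A @ B))) (p1, S1)"
      using runAB prefix safa_run_append_iff by blast
    ultimately show ?thesis
      by (intro exI[of _ "Suc j"]) auto
  qed
qed

lemma safa_run_stationary_pump:
  assumes wf: "safa_wf M" and run: "safa_run M (q, S) u (q', S)" and q: "q \<in> sQ M"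
    and long: "card (sQ M) \<le> length u"
  obtains i j where "i < j" "j \<le> length u" "safa_run M (q, S) (take i u @ drop j u) (q', S)"
proof -
  have "\<exists>c. safa_run M (q, S) (take k u) c \<and> safa_run M c (drop k u) (q', S)" for k
    using run safa_run_append_iff[of M "(q, S)" "take k u" "drop k u"] by simp
  then obtain c where pre: "\<And>k. safa_run M (q, S) (take k u) (c k)"
    and post: "\<And>k. safa_run M (c k) (drop k u) (q', S)"
    by metis
  have "stored (snd (c k)) = stored S" for k
    using safa_run_stored_mono[OF pre[of k]] safa_run_stored_mono[OF post[of k]] by simp
  then have store: "snd (c k) = S" for k
    by (simp add: stored_eq_iff)
  have "fst ` c ` {..length u} \<subseteq> sQ M"
    using safa_run_state_in_sQ[OF pre wf] q by auto
  then have "card (fst ` c ` {..length u}) \<le> card (sQ M)"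
    using wf by (intro card_mono) (auto simp: safa_wf_def)
  then have "\<not> inj_on (fst \<circ> c) {..length u}"
    using long by (intro pigeonhole) (simp add: image_comp)
  then obtain i j where "i \<le> length u" "j \<le> length u" "i \<noteq> j" "fst (c i) = fst (c j)"
    unfolding inj_on_def by auto
  then obtain i j where ij: "i < j" "j \<le> length u" "fst (c i) = fst (c j)"
  proof (cases "i < j")
    case False
    with that[of j i] show ?thesis
      using \<open>i \<le> length u\<close> \<open>i \<noteq> j\<close> \<open>fst (c i) = fst (c j)\<close> by simp
  qed (use that in blast)
  then have "c i = c j"
    using store by (simp add: prod_eq_iff)
  then have "safa_run M (q, S) (take i u @ drop j u) (q', S)"
    using pre[of i] post[of j] safa_run_append_iff by metis
  with ij that show ?thesis by blast
qed

definition alt_cca :: "(nat, nat) cca" where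
  "alt_cca = \<lparr>cQ = {0}, cSigma = {0, 1},
     cdelta = {(0, 0, (REq, 0), ResetTo, 1, 0), (0, 1, (REq, 1), ResetTo, 0, 0)},
     cq0 = 0, cF = {0}\<rparr>"

lemma alt_cca_simps [simp]:
  "cdelta alt_cca = {(0, 0, (REq, 0), ResetTo, 1, 0), (0, 1, (REq, 1), ResetTo, 0, 0)}"
  "cq0 alt_cca = 0" "cF alt_cca = {0}"
  by (simp_all add: alt_cca_def)

lemma cca_wf_alt_cca: "cca_wf alt_cca"
  by (auto simp: cca_wf_def alt_cca_def)

fun alt_step :: "(data \<Rightarrow> nat) \<Rightarrow> nat \<times> data \<Rightarrow> (data \<Rightarrow> nat) option" where
  "alt_step \<beta> (a, d) =
     (if a = 0 \<and> \<beta> d = 0 then Some (\<beta>(d := 1))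
      else if a = 1 \<and> \<beta> d = 1 then Some (\<beta>(d := 0)) else None)"

fun alt_exec :: "(data \<Rightarrow> nat) \<Rightarrow> (nat \<times> data) list \<Rightarrow> (data \<Rightarrow> nat) option" where
  "alt_exec \<beta> [] = Some \<beta>"
| "alt_exec \<beta> (x # w) = Option.bind (alt_step \<beta> x) (\<lambda>\<beta>'. alt_exec \<beta>' w)"

lemma cca_run_Cons_iff:
  "cca_run C (q, \<beta>) ((a, d) # w) c' \<longleftrightarrow>
   (\<exists>r e ins n p. (q, a, (r, e), ins, n, p) \<in> cdelta C \<and> cca_holds r (\<beta> d) e \<and>
      cca_run C (p, \<beta>(d := cca_apply ins n (\<beta> d))) w c')"
  by (subst cca_run.simps) auto

lemma cca_run_alt_cca_Cons_iff:
  "cca_run alt_cca (q, \<beta>) ((a, d) # w) c' \<longleftrightarrow> q = 0 \<and>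
    (a = 0 \<and> \<beta> d = 0 \<and> cca_run alt_cca (0, \<beta>(d := 1)) w c' \<or>
     a = 1 \<and> \<beta> d = 1 \<and> cca_run alt_cca (0, \<beta>(d := 0)) w c')"
  unfolding cca_run_Cons_iff by force

lemma cca_run_alt_cca_iff:
  "cca_run alt_cca (0, \<beta>) w (q, \<beta>') \<longleftrightarrow> q = 0 \<and> alt_exec \<beta> w = Some \<beta>'"
proof (induction w arbitrary: \<beta>)
  case Nil
  then show ?case by (subst cca_run.simps) auto
next
  case (Cons x w)
  obtain a d where "x = (a, d)" by fastforce
  then show ?case
    using Cons.IH by (auto simp add: cca_run_alt_cca_Cons_iff fun_upd_def)
qed

lemma cca_lang_alt_cca: "w \<in> cca_lang alt_cca \<longleftrightarrow> alt_exec (\<lambda>_. 0) w \<noteq> None"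
  by (auto simp: cca_lang_def cca_run_alt_cca_iff)

lemma alt_exec_append: "alt_exec \<beta> (u @ v) = Option.bind (alt_exec \<beta> u) (\<lambda>\<beta>'. alt_exec \<beta>' v)"
  by (induction u arbitrary: \<beta>) (auto split: Option.bind_split)

lemma alt_exec_opens:
  "distinct ds \<Longrightarrow> alt_exec \<beta> (map (Pair 0) ds) =
    (if \<forall>d\<in>set ds. \<beta> d = 0 then Some (\<lambda>d. if d \<in> set ds then 1 else \<beta> d) else None)"
  by (induction ds arbitrary: \<beta>) (auto simp: fun_eq_iff)

lemma alt_exec_closes:
  "distinct ds \<Longrightarrow> alt_exec \<beta> (map (Pair 1) ds) =
    (if \<forall>d\<in>set ds. \<beta> d = 1 then Some (\<lambda>d. if d \<in> set ds then 0 else \<beta> d) else None)"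
  by (induction ds arbitrary: \<beta>) (auto simp: fun_eq_iff)

lemma alt_exec_concat_replicate:
  "alt_exec \<beta> xs = Some \<beta> \<Longrightarrow> alt_exec \<beta> (concat (replicate r xs)) = Some \<beta>"
  by (induction r) (simp_all add: alt_exec_append)

lemma alt_exec_round:
  assumes "distinct ds"
  shows "alt_exec (\<lambda>_. 0) (map (Pair 0) ds @ map (Pair 1) ds) = Some (\<lambda>_. 0)"
proof -
  have "alt_exec (\<lambda>_. 0) (map (Pair 0) ds) = Some (\<lambda>d. if d \<in> set ds then 1 else 0)"
    using alt_exec_opens[OF assms, of "\<lambda>_. 0"] by simp
  moreover have "alt_exec (\<lambda>d. if d \<in> set ds then 1 else 0) (map (Pair 1) ds) = Some (\<lambda>_. 0)"
    using alt_exec_closes[OF assms, of "\<lambda>d. if d \<in> set ds then 1 else 0"]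
    by (simp add: fun_eq_iff)
  ultimately show ?thesis
    by (simp add: alt_exec_append)
qed

lemma alt_exec_skipped_open:
  assumes "distinct ds" "i < j" "j \<le> length ds"
  shows "alt_exec (\<lambda>_. 0)
    (take i (map (Pair 0) ds) @ drop j (map (Pair 0) ds) @ map (Pair 1) ds @ w) = None"
proof -
  define ks where "ks = take i ds @ drop j ds"
  have "distinct (take i ds @ ds ! i # drop (Suc i) ds)"
    using assms by (simp add: id_take_nth_drop[symmetric])
  moreover have "set (drop j ds) \<subseteq> set (drop (Suc i) ds)"
    using assms by (simp add: set_drop_subset_set_drop)
  ultimately have ks: "distinct ks" "ds ! i \<notin> set ks"
    using assms unfolding ks_def by (auto simp: set_take_disj_set_drop_if_distinct)
  have "ds ! i \<in> set ds"
    using assms by simp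
  then have "alt_exec (\<lambda>d. if d \<in> set ks then 1 else 0) (map (Pair 1) ds) = None"
    using alt_exec_closes[OF assms(1), of "\<lambda>d. if d \<in> set ks then 1 else 0"] ks(2) by auto
  moreover have word: "take i (map (Pair 0) ds) @ drop j (map (Pair 0) ds) @ map (Pair 1) ds @ w =
      map (Pair 0) ks @ map (Pair 1) ds @ w"
    by (simp add: ks_def take_map drop_map)
  ultimately show ?thesis
    unfolding word using alt_exec_opens[OF ks(1), of "\<lambda>_. 0"] by (simp add: alt_exec_append)
qed

lemma safa_lang_neq_alt_cca:
  assumes wf: "safa_wf M"
  shows "safa_lang M \<noteq> cca_lang alt_cca"
proof
  assume eq: "safa_lang M = cca_lang alt_cca"
  define n where "n = card (sQ M)"
  define A :: "(nat \<times> data) list" where "A = map (Pair 0) [0..<n]"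
  define B :: "(nat \<times> data) list" where "B = map (Pair 1) [0..<n]"
  define r where "r = Suc (sm M * n)"
  have round: "alt_exec (\<lambda>_. 0) (A @ B) = Some (\<lambda>_. 0)"
    unfolding A_def B_def by (rule alt_exec_round) simp
  then have "concat (replicate r (A @ B)) \<in> cca_lang alt_cca"
    by (simp add: cca_lang_alt_cca alt_exec_concat_replicate)
  then obtain qf Sf
    where run: "safa_run M (sq0 M, \<lambda>_. {}) (concat (replicate r (A @ B))) (qf, Sf)"
    and final: "qf \<in> sF M"
    unfolding eq[symmetric] safa_lang_def by blast
  have "\<exists>j<r. \<exists>p S p'. safa_run M (sq0 M, \<lambda>_. {}) (concat (replicate j (A @ B))) (p, S) \<and>
      safa_run M (p, S) A (p', S) \<and>
      safa_run M (p', S) (B @ concat (replicate (r - Suc j) (A @ B))) (qf, Sf)"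
    by (rule safa_run_stationary_round[OF wf finite_lessThan _ run])
      (auto simp: A_def B_def stored_def r_def)
  then obtain j p S p' where "j < r"
    and before: "safa_run M (sq0 M, \<lambda>_. {}) (concat (replicate j (A @ B))) (p, S)"
    and stationary: "safa_run M (p, S) A (p', S)"
    and after: "safa_run M (p', S) (B @ concat (replicate (r - Suc j) (A @ B))) (qf, Sf)"
    by blast
  have "p \<in> sQ M"
    using safa_run_state_in_sQ[OF before wf] wf by (simp add: safa_wf_def)
  moreover have "card (sQ M) \<le> length A"
    by (simp add: A_def n_def)
  ultimately obtain i k where "i < k" "k \<le> length A"
    and pumped: "safa_run M (p, S) (take i A @ drop k A) (p', S)"
    by (rule safa_run_stationary_pump[OF wf stationary])
  let ?rest = "B @ concat (replicate (r - Suc j) (A @ B))"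
  let ?w = "concat (replicate j (A @ B)) @ (take i A @ drop k A) @ ?rest"
  have "safa_run M (sq0 M, \<lambda>_. {}) ?w (qf, Sf)"
    using before pumped after safa_run_append_iff by blast
  then have "?w \<in> safa_lang M"
    using final by (auto simp: safa_lang_def)
  moreover have "alt_exec (\<lambda>_. 0) (take i A @ drop k A @ ?rest) = None"
    using \<open>i < k\<close> \<open>k \<le> length A\<close> unfolding A_def B_def by (intro alt_exec_skipped_open) simp_all
  then have "?w \<notin> cca_lang alt_cca"
    using alt_exec_concat_replicate[OF round, of j]
    by (simp add: cca_lang_alt_cca alt_exec_append[of _ "concat (replicate j (A @ B))"])
  ultimately show False
    using eq by simp
qed

theorem theorem17:
  shows "(\<forall>M :: ('q, 'a) safa. safa_wf M \<longrightarrow>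
            (\<exists>C :: (nat, 'a) cca. cca_wf C \<and> cca_lang C = safa_lang M))
       \<and> (\<exists>C :: (nat, nat) cca. cca_wf C \<and>
            (\<forall>M :: (nat, nat) safa. safa_wf M \<longrightarrow> safa_lang M \<noteq> cca_lang C))"
proof (intro conjI allI impI)
  fix M :: "('q, 'a) safa"
  assume wf: "safa_wf M"
  then obtain f :: "'q \<Rightarrow> nat" where "inj_on f (sQ M)"
    using finite_imp_inj_to_nat_seg by (metis safa_wf_def)
  then show "\<exists>C :: (nat, 'a) cca. cca_wf C \<and> cca_lang C = safa_lang M"
    using cca_wf_cca_of_safa[OF wf] cca_lang_cca_of_safa[OF wf] by blast
next
  show "\<exists>C :: (nat, nat) cca. cca_wf C \<and>
      (\<forall>M :: (nat, nat) safa. safa_wf M \<longrightarrow> safa_lang M \<noteq> cca_lang C)"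
    using cca_wf_alt_cca safa_lang_neq_alt_cca by blast
qed

end
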